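(* Let $M$ be a matroid on ground set $E$ that is $k$-nearly finitary for some integer $k$. Let $S(M)=\{F^*\cup B: F^*\text{ is a base of }(M^{\mathrm{fin}})^*,\ B\text{ is a base of }M,\ F^*\cap B=\emptyset\}$ and let $S(M)_{\min}$ be the set of inclusion-minimal elements of $S(M)$. Then $S(M)_{\min}$ is non-empty.
   Context: Matroids (possibly infinite): $\emptyset$ independent; subsets of independent sets independent; if $B$ is maximal independent and $A$ non-maximal independent, then $A\cup\{b\}$ is independent for some $b\in B\setminus A$; for independent $A\subseteq X\subseteq E$ there is a maximal independent $S$ with $A\subseteq S\subseteq X$. Bases are maximal independent sets. The dual $N^*$ has as bases the complements $E\setminus B$ of bases $B$ of $N$. The finitarization $M^{\mathrm{fin}}$ has as independent sets those sets all of whose finite subsets are independent in $M$. $M$ is $k$-nearly finitary if $|F\setminus B|\le k$ whenever a base $F$ of $M^{\mathrm{fin}}$ contains a base $B$ of $M$. *)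

theory Defs
  imports Main
begin

definition maximal_in :: "'a set set \<Rightarrow> 'a set \<Rightarrow> bool" where
  "maximal_in \<F> X \<longleftrightarrow> X \<in> \<F> \<and> (\<forall>Y\<in>\<F>. X \<subseteq> Y \<longrightarrow> Y = X)"

definition matroid :: "'a set \<Rightarrow> 'a set set \<Rightarrow> bool" where
  "matroid E I \<longleftrightarrow>
     (\<forall>A\<in>I. A \<subseteq> E) \<and>
     {} \<in> I \<and>
     (\<forall>A B. A \<in> I \<and> B \<subseteq> A \<longrightarrow> B \<in> I) \<and>
     (\<forall>A B. A \<in> I \<and> \<not> maximal_in I A \<and> maximal_in I B \<longrightarrow>
            (\<exists>b\<in>B - A. insert b A \<in> I)) \<and>
     (\<forall>A X. A \<in> I \<and> A \<subseteq> X \<and> X \<subseteq> E \<longrightarrow>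
            (\<exists>S. maximal_in {Z \<in> I. Z \<subseteq> X} S \<and> A \<subseteq> S))"

definition bases :: "'a set set \<Rightarrow> 'a set set" where
  "bases I = {B. maximal_in I B}"

definition dual_bases :: "'a set \<Rightarrow> 'a set set \<Rightarrow> 'a set set" where
  "dual_bases E I = {E - B | B. B \<in> bases I}"

definition fin_indep :: "'a set \<Rightarrow> 'a set set \<Rightarrow> 'a set set" where
  "fin_indep E I = {A. A \<subseteq> E \<and> (\<forall>F. F \<subseteq> A \<and> finite F \<longrightarrow> F \<in> I)}"

definition nearly_finitary :: "nat \<Rightarrow> 'a set \<Rightarrow> 'a set set \<Rightarrow> bool" where
  "nearly_finitary k E I \<longleftrightarrow>
     (\<forall>F B. F \<in> bases (fin_indep E I) \<and> B \<in> bases I \<and> B \<subseteq> F \<longrightarrow>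
            finite (F - B) \<and> card (F - B) \<le> k)"

definition S_set :: "'a set \<Rightarrow> 'a set set \<Rightarrow> 'a set set" where
  "S_set E I = {Fs \<union> B | Fs B. Fs \<in> dual_bases E (fin_indep E I) \<and> B \<in> bases I \<and> Fs \<inter> B = {}}"

definition S_min :: "'a set \<Rightarrow> 'a set set \<Rightarrow> 'a set set" where
  "S_min E I = {X \<in> S_set E I. \<forall>Y \<in> S_set E I. Y \<subseteq> X \<longrightarrow> Y = X}"

end

theory Submission
  imports Defs
begin

text \<open>
  Since bases of \<open>M\<close> lie in \<open>E\<close>, the condition \<open>F\<^sup>* \<inter> B = {}\<close> for
  \<open>F\<^sup>* = E - F\<close> says \<open>B \<subseteq> F\<close>, so \<open>S(M)\<close> consists of the complements \<open>E - (F - B)\<close> of the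
  gaps \<open>F - B\<close> between a base \<open>F\<close> of \<open>M\<^sup>f\<^sup>i\<^sup>n\<close> and a base \<open>B \<subseteq> F\<close> of \<open>M\<close>. Being
  \<open>k\<close>-nearly finitary means that all gaps are finite of size at most \<open>k\<close>, so a gap of
  maximal cardinality is inclusion-maximal and its complement is minimal in \<open>S(M)\<close>. At
  least one gap exists: \<open>M\<close> has a base, and by Zorn's lemma every independent set extends
  to a base of \<open>M\<^sup>f\<^sup>i\<^sup>n\<close>, whose independent sets are closed under unions of chains.
\<close>

lemma matroid_indep_subset_ground: "matroid E I \<Longrightarrow> A \<in> I \<Longrightarrow> A \<subseteq> E"
  by (simp add: matroid_def)

lemma matroid_indep_downward_closed: "matroid E I \<Longrightarrow> A \<in> I \<Longrightarrow> C \<subseteq> A \<Longrightarrow> C \<in> I"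
  unfolding matroid_def by meson

lemma bases_subset: "bases I \<subseteq> I"
  unfolding bases_def maximal_in_def by blast

lemma matroid_ex_base:
  assumes "matroid E I"
  shows "\<exists>B. B \<in> bases I"
proof -
  from assms obtain B where "maximal_in {Z \<in> I. Z \<subseteq> E} B"
    unfolding matroid_def by (metis order_refl)
  moreover have "{Z \<in> I. Z \<subseteq> E} = I"
    using matroid_indep_subset_ground[OF assms] by blast
  ultimately show ?thesis
    unfolding bases_def by auto
qed

lemma fin_indep_subset_ground: "A \<in> fin_indep E I \<Longrightarrow> A \<subseteq> E"
  unfolding fin_indep_def by blast

lemma matroid_indep_imp_fin_indep: "matroid E I \<Longrightarrow> A \<in> I \<Longrightarrow> A \<in> fin_indep E I"
  unfolding fin_indep_def
  using matroid_indep_subset_ground matroid_indep_downward_closed by blast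

lemma fin_indep_Union_chain:
  assumes "C \<noteq> {}" and "subset.chain (fin_indep E I) C"
  shows "\<Union>C \<in> fin_indep E I"
  unfolding fin_indep_def
proof (intro CollectI conjI allI impI)
  have C_fin_indep: "C \<subseteq> fin_indep E I"
    using assms(2) by (simp add: subset_chain_def)
  then show "\<Union>C \<subseteq> E"
    by (auto dest: fin_indep_subset_ground)
  fix F
  assume F: "F \<subseteq> \<Union>C \<and> finite F"
  then obtain X where "X \<in> C" "F \<subseteq> X"
    using finite_subset_Union_chain[OF _ _ assms] by blast
  with C_fin_indep F show "F \<in> I"
    unfolding fin_indep_def by blast
qed

lemma matroid_indep_extends_to_fin_base:
  assumes "matroid E I" and "A \<in> I"
  shows "\<exists>F \<in> bases (fin_indep E I). A \<subseteq> F"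
proof -
  let ?\<A> = "{X \<in> fin_indep E I. A \<subseteq> X}"
  have "\<exists>F\<in>?\<A>. \<forall>X\<in>?\<A>. F \<subseteq> X \<longrightarrow> X = F"
  proof (rule subset_Zorn_nonempty)
    show "?\<A> \<noteq> {}"
      using matroid_indep_imp_fin_indep[OF assms] by blast
    fix C
    assume "C \<noteq> {}" and "subset.chain ?\<A> C"
    then have "subset.chain (fin_indep E I) C" and "\<forall>X\<in>C. A \<subseteq> X"
      by (auto simp: subset_chain_def)
    with \<open>C \<noteq> {}\<close> show "\<Union>C \<in> ?\<A>"
      using fin_indep_Union_chain by blast
  qed
  then obtain F where "F \<in> fin_indep E I" "A \<subseteq> F"
    and "\<forall>X\<in>?\<A>. F \<subseteq> X \<longrightarrow> X = F"
    by blast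
  then have "maximal_in (fin_indep E I) F"
    unfolding maximal_in_def by blast
  with \<open>A \<subseteq> F\<close> show ?thesis
    unfolding bases_def by blast
qed

definition base_gaps :: "'a set \<Rightarrow> 'a set set \<Rightarrow> 'a set set" where
  "base_gaps E I =
     {F - B | F B. F \<in> bases (fin_indep E I) \<and> B \<in> bases I \<and> B \<subseteq> F}"

lemma base_gap_subset_ground: "D \<in> base_gaps E I \<Longrightarrow> D \<subseteq> E"
  unfolding base_gaps_def using bases_subset fin_indep_subset_ground by blast

lemma matroid_base_gaps_nonempty:
  assumes "matroid E I"
  shows "base_gaps E I \<noteq> {}"
proof -
  obtain B where B: "B \<in> bases I"
    using matroid_ex_base[OF assms] by blast
  then have "B \<in> I"
    using bases_subset by blast
  then obtain F where "F \<in> bases (fin_indep E I)" "B \<subseteq> F"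
    using matroid_indep_extends_to_fin_base[OF assms] by blast
  with B show ?thesis
    unfolding base_gaps_def by blast
qed

lemma S_set_eq_base_gap_complements:
  assumes "matroid E I"
  shows "S_set E I = (\<lambda>D. E - D) ` base_gaps E I"
proof (intro equalityI subsetI)
  fix X
  assume "X \<in> S_set E I"
  then obtain F B where X: "X = (E - F) \<union> B" and F: "F \<in> bases (fin_indep E I)"
    and B: "B \<in> bases I" and disjoint: "(E - F) \<inter> B = {}"
    unfolding S_set_def dual_bases_def by blast
  have "B \<subseteq> E"
    using B matroid_indep_subset_ground[OF assms] bases_subset by blast
  with disjoint have "B \<subseteq> F"
    by blast
  moreover have "X = E - (F - B)"
    using X \<open>B \<subseteq> E\<close> by blast
  ultimately show "X \<in> (\<lambda>D. E - D) ` base_gaps E I"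
    unfolding base_gaps_def using F B by blast
next
  fix X
  assume "X \<in> (\<lambda>D. E - D) ` base_gaps E I"
  then obtain F B where X: "X = E - (F - B)" and F: "F \<in> bases (fin_indep E I)"
    and B: "B \<in> bases I" and "B \<subseteq> F"
    unfolding base_gaps_def by blast
  have "F \<subseteq> E"
    using F bases_subset fin_indep_subset_ground by blast
  with \<open>B \<subseteq> F\<close> have "X = (E - F) \<union> B" and "(E - F) \<inter> B = {}"
    using X by blast+
  moreover have "E - F \<in> dual_bases E (fin_indep E I)"
    unfolding dual_bases_def using F by blast
  ultimately show "X \<in> S_set E I"
    unfolding S_set_def using B by blast
qed

lemma nearly_finitary_base_gaps_bounded:
  "nearly_finitary k E I \<Longrightarrow> D \<in> base_gaps E I \<Longrightarrow> finite D \<and> card D \<le> k"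
  unfolding nearly_finitary_def base_gaps_def by blast

lemma ex_maximal_in_card_bounded:
  assumes "X\<^sub>0 \<in> \<F>" and "\<And>X. X \<in> \<F> \<Longrightarrow> finite X \<and> card X \<le> k"
  shows "\<exists>X. maximal_in \<F> X"
proof -
  obtain X where X: "X \<in> \<F>" and X_greatest: "\<And>Y. Y \<in> \<F> \<Longrightarrow> card Y \<le> card X"
    using ex_has_greatest_nat[of "\<lambda>X. X \<in> \<F>" X\<^sub>0 card "Suc k"] assms by (auto simp: less_Suc_eq_le)
  have "X = Y" if "Y \<in> \<F>" and "X \<subseteq> Y" for Y
    using card_seteq[OF _ \<open>X \<subseteq> Y\<close> X_greatest[OF \<open>Y \<in> \<F>\<close>]] assms(2)[OF \<open>Y \<in> \<F>\<close>] by blast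
  with X show ?thesis
    unfolding maximal_in_def by blast
qed

lemma complement_of_maximal_is_minimal:
  assumes "maximal_in \<F> D" and "\<And>X. X \<in> \<F> \<Longrightarrow> X \<subseteq> E"
  shows "E - D \<in> (\<lambda>X. E - X) ` \<F>"
    and "\<And>Y. Y \<in> (\<lambda>X. E - X) ` \<F> \<Longrightarrow> Y \<subseteq> E - D \<Longrightarrow> Y = E - D"
  using assms unfolding maximal_in_def by blast+

theorem theorem3p4p4:
  fixes E :: "'a set" and I :: "'a set set" and k :: nat
  assumes "matroid E I"
    and "nearly_finitary k E I"
  shows "S_min E I \<noteq> {}"
proof -
  obtain D\<^sub>0 where "D\<^sub>0 \<in> base_gaps E I"
    using matroid_base_gaps_nonempty[OF assms(1)] by blast
  then obtain D where D: "maximal_in (base_gaps E I) D"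
    using ex_maximal_in_card_bounded[OF _ nearly_finitary_base_gaps_bounded[OF assms(2)]] by blast
  note S_set_eq = S_set_eq_base_gap_complements[OF assms(1)]
  note complement_D = complement_of_maximal_is_minimal[OF D base_gap_subset_ground[of _ E I]]
  have "E - D \<in> S_set E I"
    unfolding S_set_eq by (rule complement_D(1))
  moreover have "Y = E - D" if "Y \<in> S_set E I" and "Y \<subseteq> E - D" for Y
    using complement_D(2) that unfolding S_set_eq by blast
  ultimately have "E - D \<in> S_min E I"
    unfolding S_min_def by blast
  then show ?thesis
    by blast
qed

end
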